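(* Let $E$ be a set and let the power group $G=2^E$ carry a gliding system in which any two independent glides are disjoint subsets of $E$. Let $\omega:X_G\to I^E$ be the evaluation map. Suppose that for any two different cubic sets of glides $S_1,S_2$ one has $[S_1]\ne[S_2]$. Suppose $\mathcal{D}\subset G$ is such that every glide $s$ admits a partition $s=s'\sqcup s''$ into two nonempty subsets with the property that whenever $A\in\mathcal{D}$ and $sA\in\mathcal{D}$, the set $s\cap A$ equals $s'$ or $s''$. Then the restriction of $\omega$ to $X_{\mathcal{D}}\subset X_G$ is injective.
   Context: $2^E$ is the group of subsets of $E$ with product $AB=(A\cup B)\setminus(A\cap B)$; every element is its own inverse. A gliding system in $G$ is a pair $(\mathcal{G},\mathcal{I})$, $\mathcal{G}\subset G\setminus\{\emptyset\}$ (glides), $\mathcal{I}\subset\mathcal{G}\times\mathcal{G}$ symmetric (independence) with $st=ts\ne\emptyset$ for $(s,t)\in\mathcal{I}$. A cubic set of glides is a finite set $S$ of pairwise independent glides with $[T_1]\ne[T_2]$ for distinct $T_1,T_2\subset S$, where $[T]=\prod_{t\in T}t$ (here the union, since independent glides are disjoint). The glide complex $X_G$ is the cubed complex obtained from the cubes $I^S$ (points $(A,S,x)$, $A\in G$, $S$ cubic, $x:S\to I=[0,1]$) modulo the equivalence generated by $(A,S,x)\sim(A,S',x')$ when $S\subset S'$, $x'|_S=x$, $x'(S'\setminus S)=0$, and $(A,S,x)\sim([T]A,S,x')$ when $T\subset S$, $x'=x$ on $S\setminus T$, $x'(t)=1-x(t)$ for $t\in T$. For $\mathcal{D}\subset G$,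 $X_{\mathcal{D}}$ is the subcomplex of cubes all of whose vertices $[T]A$ ($T\subset S$) lie in $\mathcal{D}$. For $A\subset E$ let $\delta_A:E\to\{0,1\}$ be its characteristic function. The evaluation map is $\omega(A,S,x)=\delta_A+(1-2\delta_A)\sum_{s\in S}x(s)\delta_s$; explicitly $\omega(a)(e)=\delta_A(e)$ for $e\notin\bigcup_{s\in S}s$, $=x(s)$ for $e\in s\setminus A$, and $=1-x(s)$ for $e\in s\cap A$ ($s\in S$). *)

theory Defs
  imports Main "HOL-Library.Indicator_Function"
begin

text \<open>The power group G = 2^E is the type 'e set, with product the symmetric difference.\<close>

definition gprod :: "'e set \<Rightarrow> 'e set \<Rightarrow> 'e set" where
  "gprod A B = (A \<union> B) - (A \<inter> B)"

text \<open>Product [T] of a finite set T of group elements (empty product = neutral element {}).\<close>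
definition bprod :: "'e set set \<Rightarrow> 'e set" where
  "bprod T = {e. odd (card {t \<in> T. e \<in> t})}"

definition gliding_system :: "'e set set \<Rightarrow> ('e set \<times> 'e set) set \<Rightarrow> bool" where
  "gliding_system Gl Ind \<longleftrightarrow> {} \<notin> Gl \<and> Ind \<subseteq> Gl \<times> Gl \<and> sym Ind \<and>
     (\<forall>(s,t)\<in>Ind. gprod s t = gprod t s \<and> gprod s t \<noteq> {})"

definition cubic :: "'e set set \<Rightarrow> ('e set \<times> 'e set) set \<Rightarrow> 'e set set \<Rightarrow> bool" where
  "cubic Gl Ind S \<longleftrightarrow> finite S \<and> S \<subseteq> Gl \<and>
     (\<forall>s\<in>S. \<forall>t\<in>S. s \<noteq> t \<longrightarrow> (s,t) \<in> Ind) \<and>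
     (\<forall>T1 T2. T1 \<subseteq> S \<longrightarrow> T2 \<subseteq> S \<longrightarrow> T1 \<noteq> T2 \<longrightarrow> bprod T1 \<noteq> bprod T2)"

text \<open>Representatives (A, S, x) of points of the glide complex; x : S \<rightarrow> [0,1],
  normalised to 0 outside S.\<close>
type_synonym 'e gpoint = "'e set \<times> 'e set set \<times> ('e set \<Rightarrow> real)"

definition is_gpoint :: "'e set set \<Rightarrow> ('e set \<times> 'e set) set \<Rightarrow> 'e gpoint \<Rightarrow> bool" where
  "is_gpoint Gl Ind p \<longleftrightarrow> (case p of (A, S, x) \<Rightarrow>
     cubic Gl Ind S \<and> (\<forall>s\<in>S. 0 \<le> x s \<and> x s \<le> 1) \<and> (\<forall>s. s \<notin> S \<longrightarrow> x s = 0))"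

definition glide_step :: "'e set set \<Rightarrow> ('e set \<times> 'e set) set \<Rightarrow> 'e gpoint \<Rightarrow> 'e gpoint \<Rightarrow> bool" where
  "glide_step Gl Ind p q \<longleftrightarrow> is_gpoint Gl Ind p \<and> is_gpoint Gl Ind q \<and>
     (case p of (A, S, x) \<Rightarrow> case q of (A', S', x') \<Rightarrow>
       (A' = A \<and> S \<subseteq> S' \<and> (\<forall>s\<in>S. x' s = x s) \<and> (\<forall>s\<in>S' - S. x' s = 0))
     \<or> (\<exists>T. T \<subseteq> S \<and> A' = gprod (bprod T) A \<and> S' = S \<and>
            (\<forall>s\<in>S - T. x' s = x s) \<and> (\<forall>t\<in>T. x' t = 1 - x t)))"

definition glide_equiv :: "'e set set \<Rightarrow> ('e set \<times> 'e set) set \<Rightarrow> 'e gpoint \<Rightarrow> 'e gpoint \<Rightarrow> bool" where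
  "glide_equiv Gl Ind = (\<lambda>p q. glide_step Gl Ind p q \<or> glide_step Gl Ind q p)\<^sup>*\<^sup>*"

definition in_XD :: "'e set set \<Rightarrow> ('e set \<times> 'e set) set \<Rightarrow> 'e set set \<Rightarrow> 'e gpoint \<Rightarrow> bool" where
  "in_XD Gl Ind D p \<longleftrightarrow> is_gpoint Gl Ind p \<and>
     (case p of (A, S, x) \<Rightarrow> \<forall>T. T \<subseteq> S \<longrightarrow> gprod (bprod T) A \<in> D)"

definition evalmap :: "'e gpoint \<Rightarrow> 'e \<Rightarrow> real" where
  "evalmap p = (case p of (A, S, x) \<Rightarrow> \<lambda>e.
     indicator A e + (1 - 2 * indicator A e) * (\<Sum>s\<in>S. x s * indicator s e))"

end

theory Submission
  imports Defs
begin

text \<open>Every point of X_D is equivalent to a point in the interior of a cube of X_D: flip the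
  coordinates equal to 1 and pass to the face spanned by the coordinates in (0,1). At an interior
  point (A, S, x) the evaluation lies strictly between 0 and 1 exactly on [S] = \<Union>S, so two
  interior points with equal evaluations have cubes with the same product, hence the same cube S.
  For s \<in> S both A and B are endpoints of s-edges in D, so s \<inter> A and s \<inter> B are halves of the
  partition of s: B agrees on s either with A or with its complement, i.e. B = [T]A, and comparing
  evaluations at a point of s \<inter> A shows that the coordinates of B are those of A flipped on T.\<close>

lemma mem_gprod_iff: "e \<in> gprod X Y \<longleftrightarrow> (e \<in> X \<longleftrightarrow> e \<notin> Y)"
  unfolding gprod_def by blast

lemma gprod_empty_left [simp]: "gprod {} A = A"
  unfolding gprod_def by simp

lemma gprod_gprod_disjoint: "X \<inter> Y = {} \<Longrightarrow> gprod X (gprod Y A) = gprod (X \<union> Y) A"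
  unfolding gprod_def by blast

lemma disjoint_common_elem_eq:
  "disjoint S \<Longrightarrow> s \<in> S \<Longrightarrow> t \<in> S \<Longrightarrow> e \<in> s \<Longrightarrow> e \<in> t \<Longrightarrow> s = t"
  by (metis disjnt_iff pairwiseD)

lemma mem_Union_subset_disjoint:
  assumes "disjoint S" "T \<subseteq> S" "s \<in> S" "e \<in> s"
  shows "e \<in> \<Union>T \<longleftrightarrow> s \<in> T"
proof
  assume "e \<in> \<Union>T"
  then obtain t where t: "t \<in> T" "e \<in> t" by blast
  with assms(2) have "t = s"
    using disjoint_common_elem_eq[OF assms(1) _ assms(3) _ assms(4)] by blast
  with t show "s \<in> T" by simp
qed (use assms(4) in blast)

lemma mem_bprod_iff: "e \<in> bprod S \<longleftrightarrow> odd (card {t \<in> S. e \<in> t})"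
  unfolding bprod_def by simp

lemma bprod_disjoint:
  assumes "disjoint S"
  shows "bprod S = \<Union>S"
proof (rule set_eqI)
  fix e
  show "e \<in> bprod S \<longleftrightarrow> e \<in> \<Union>S"
  proof (cases "e \<in> \<Union>S")
    case True
    then obtain s where s: "s \<in> S" "e \<in> s" by blast
    then have "{t \<in> S. e \<in> t} = {s}"
      using disjoint_common_elem_eq[OF assms s(1) _ s(2)] by blast
    with True show ?thesis unfolding mem_bprod_iff by simp
  next
    case False
    then have "{t \<in> S. e \<in> t} = {}" by blast
    with False show ?thesis unfolding mem_bprod_iff by (simp only: card.empty) simp
  qed
qed

lemma bprod_empty [simp]: "bprod {} = {}"
  unfolding bprod_def by simp

lemma bprod_singleton [simp]: "bprod {s} = s"
  by (simp add: bprod_disjoint)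

lemma cubic_finite: "cubic Gl Ind S \<Longrightarrow> finite S"
  unfolding cubic_def by simp

lemma cubic_subset: "cubic Gl Ind S \<Longrightarrow> S' \<subseteq> S \<Longrightarrow> cubic Gl Ind S'"
  unfolding cubic_def by (meson finite_subset subset_trans subsetD)

lemma cubic_disjoint:
  assumes "cubic Gl Ind S" "\<forall>(s,t)\<in>Ind. s \<inter> t = {}"
  shows "disjoint S"
proof (rule pairwiseI)
  fix s t assume "s \<in> S" "t \<in> S" "s \<noteq> t"
  with assms(1) have "(s, t) \<in> Ind" unfolding cubic_def by simp
  with assms(2) show "disjnt s t" unfolding disjnt_def by auto
qed

lemma evalmap_outside: "e \<notin> \<Union>S \<Longrightarrow> evalmap (A, S, x) e = indicator A e"
  unfolding evalmap_def by (auto intro: sum.neutral)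

lemma evalmap_inside:
  assumes "finite S" "disjoint S" "s \<in> S" "e \<in> s"
  shows "evalmap (A, S, x) e = (if e \<in> A then 1 - x s else x s)"
proof -
  have "e \<notin> t" if "t \<in> S - {s}" for t
    using that disjoint_common_elem_eq[OF assms(2,3) _ assms(4)] by blast
  then have "(\<Sum>t\<in>S. x t * indicator t e) = (\<Sum>t\<in>{s}. x t * indicator t e)"
    using assms by (intro sum.mono_neutral_right) auto
  with assms(4) show ?thesis unfolding evalmap_def by (simp add: indicator_def)
qed

lemma evalmap_face:
  assumes "finite S'" "S \<subseteq> S'" "\<forall>s\<in>S. x' s = x s" "\<forall>s\<in>S' - S. x' s = 0"
  shows "evalmap (A, S', x') = evalmap (A, S, x)"
proof -
  have "(\<Sum>s\<in>S'. x' s * indicator s e) = (\<Sum>s\<in>S. x s * indicator s e)" for e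
    using assms by (intro sum.mono_neutral_cong_right) auto
  then show ?thesis unfolding evalmap_def by simp
qed

lemma evalmap_flip:
  assumes "finite S" "disjoint S" "T \<subseteq> S"
    and "\<forall>s\<in>S - T. x' s = x s" "\<forall>t\<in>T. x' t = 1 - x t"
  shows "evalmap (gprod (bprod T) A, S, x') = evalmap (A, S, x)"
proof
  fix e
  have T: "bprod T = \<Union>T"
    using assms(2,3) by (simp add: bprod_disjoint pairwise_subset)
  show "evalmap (gprod (bprod T) A, S, x') e = evalmap (A, S, x) e"
  proof (cases "e \<in> \<Union>S")
    case True
    then obtain s where s: "s \<in> S" "e \<in> s" by blast
    have "e \<in> \<Union>T \<longleftrightarrow> s \<in> T"
      using mem_Union_subset_disjoint[OF assms(2,3) s] .
    with assms s show ?thesis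
      by (auto simp: evalmap_inside T mem_gprod_iff)
  next
    case False
    with assms(3) show ?thesis
      by (auto simp: evalmap_outside T mem_gprod_iff indicator_def)
  qed
qed

lemma evalmap_glide_step:
  assumes "\<forall>(s,t)\<in>Ind. s \<inter> t = {}" "glide_step Gl Ind p q"
  shows "evalmap p = evalmap q"
proof -
  obtain A S x A' S' x' where pq: "p = (A, S, x)" "q = (A', S', x')"
    by (cases p, cases q) auto
  have "cubic Gl Ind S" "cubic Gl Ind S'"
    using assms(2) unfolding glide_step_def is_gpoint_def pq by simp_all
  then have S: "finite S" "disjoint S" and S': "finite S'"
    using assms(1) by (simp_all add: cubic_finite cubic_disjoint)
  from assms(2) consider
      "A' = A" "S \<subseteq> S'" "\<forall>s\<in>S. x' s = x s" "\<forall>s\<in>S' - S. x' s = 0"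
    | T where "T \<subseteq> S" "A' = gprod (bprod T) A" "S' = S"
        "\<forall>s\<in>S - T. x' s = x s" "\<forall>t\<in>T. x' t = 1 - x t"
    unfolding glide_step_def pq by auto
  then show ?thesis
  proof cases
    case 1
    with S' show ?thesis unfolding pq by (simp add: evalmap_face[of S' S x' x])
  next
    case 2
    with S show ?thesis unfolding pq by (simp add: evalmap_flip[of S T x' x])
  qed
qed

lemma glide_equiv_eq_rtranclp_symclp: "glide_equiv Gl Ind = (symclp (glide_step Gl Ind))\<^sup>*\<^sup>*"
  unfolding glide_equiv_def symclp_def[abs_def] ..

lemma glide_equiv_sym: "glide_equiv Gl Ind p q \<Longrightarrow> glide_equiv Gl Ind q p"
  unfolding glide_equiv_eq_rtranclp_symclp by (rule sympD[OF symp_rtranclp_symclp])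

lemma glide_equiv_trans:
  "glide_equiv Gl Ind p q \<Longrightarrow> glide_equiv Gl Ind q r \<Longrightarrow> glide_equiv Gl Ind p r"
  unfolding glide_equiv_def by (rule rtranclp_trans)

lemma glide_equiv_of_step: "glide_step Gl Ind p q \<Longrightarrow> glide_equiv Gl Ind p q"
  unfolding glide_equiv_def by auto

lemma evalmap_glide_equiv:
  assumes "\<forall>(s,t)\<in>Ind. s \<inter> t = {}" "glide_equiv Gl Ind p q"
  shows "evalmap p = evalmap q"
  using assms(2) unfolding glide_equiv_def
  by induction (auto dest: evalmap_glide_step[OF assms(1)])

lemma gprod_bprod_bprod_disjoint:
  assumes "disjoint S" "U \<subseteq> S" "T \<subseteq> S" "U \<inter> T = {}"
  shows "gprod (bprod U) (gprod (bprod T) A) = gprod (bprod (U \<union> T)) A"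
proof -
  have "disjoint U" "disjoint T" "disjoint (U \<union> T)"
    using assms by (auto intro: pairwise_subset)
  moreover have "\<Union>U \<inter> \<Union>T = {}"
  proof (rule ccontr)
    assume "\<Union>U \<inter> \<Union>T \<noteq> {}"
    then obtain u t e where "u \<in> U" "t \<in> T" "e \<in> u" "e \<in> t" by blast
    with assms show False
      using disjoint_common_elem_eq[OF assms(1), of u t e] by blast
  qed
  ultimately show ?thesis
    by (simp add: bprod_disjoint gprod_gprod_disjoint)
qed

lemma in_XD_vertex: "in_XD Gl Ind D (A, S, x) \<Longrightarrow> T \<subseteq> S \<Longrightarrow> gprod (bprod T) A \<in> D"
  unfolding in_XD_def by simp

lemma in_XD_face_of_flip:
  assumes "in_XD Gl Ind D (A, S, x)" "disjoint S" "T \<subseteq> S" "S' \<subseteq> S - T"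
    and "is_gpoint Gl Ind (gprod (bprod T) A, S', x')"
  shows "in_XD Gl Ind D (gprod (bprod T) A, S', x')"
proof -
  have "gprod (bprod U) (gprod (bprod T) A) \<in> D" if "U \<subseteq> S'" for U
  proof -
    have "gprod (bprod U) (gprod (bprod T) A) = gprod (bprod (U \<union> T)) A"
      using that assms(2-4) by (intro gprod_bprod_bprod_disjoint) auto
    with that assms(3,4) show ?thesis
      using in_XD_vertex[OF assms(1), of "U \<union> T"] by auto
  qed
  with assms(5) show ?thesis unfolding in_XD_def by simp
qed

lemma in_XD_interior_representative:
  assumes disj: "\<forall>(s,t)\<in>Ind. s \<inter> t = {}" and p: "in_XD Gl Ind D (A, S, x)"
  obtains A' S' x' where "in_XD Gl Ind D (A', S', x')" "\<forall>s\<in>S'. 0 < x' s \<and> x' s < 1"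
    "glide_equiv Gl Ind (A, S, x) (A', S', x')"
proof -
  have gp: "is_gpoint Gl Ind (A, S, x)"
    using p unfolding in_XD_def by simp
  then have cub: "cubic Gl Ind S" and x01: "\<forall>s\<in>S. 0 \<le> x s \<and> x s \<le> 1"
    and x0: "\<forall>s. s \<notin> S \<longrightarrow> x s = 0"
    unfolding is_gpoint_def by simp_all
  have disjS: "disjoint S"
    using cub disj by (rule cubic_disjoint)
  define T where "T = {s \<in> S. x s = 1}"
  define A' where "A' = gprod (bprod T) A"
  define x1 where "x1 = (\<lambda>s. if s \<in> T then 0 else x s)"
  define S' where "S' = {s \<in> S. 0 < x s \<and> x s < 1}"
  define x' where "x' = (\<lambda>s. if s \<in> S' then x s else 0)"
  have TS: "T \<subseteq> S" and S'S: "S' \<subseteq> S - T"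
    unfolding T_def S'_def by auto
  have gp1: "is_gpoint Gl Ind (A', S, x1)"
    using cub x01 x0 unfolding is_gpoint_def x1_def by auto
  have gp': "is_gpoint Gl Ind (A', S', x')"
    using cubic_subset[OF cub] S'S unfolding is_gpoint_def x'_def S'_def by auto
  have "glide_step Gl Ind (A, S, x) (A', S, x1)"
    using gp gp1 TS unfolding glide_step_def A'_def x1_def T_def by auto
  moreover have "glide_step Gl Ind (A', S', x') (A', S, x1)"
  proof -
    have "x1 s = 0" if "s \<in> S - S'" for s
    proof -
      have "x s = 0 \<or> x s = 1"
        using that x01 unfolding S'_def by fastforce
      with that show ?thesis unfolding x1_def T_def by auto
    qed
    then show ?thesis
      using gp1 gp' S'S unfolding glide_step_def x1_def x'_def T_def S'_def by auto
  qed
  ultimately have "glide_equiv Gl Ind (A, S, x) (A', S', x')"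
    by (meson glide_equiv_of_step glide_equiv_sym glide_equiv_trans)
  moreover have "in_XD Gl Ind D (A', S', x')"
    using in_XD_face_of_flip[OF p disjS TS S'S] gp' unfolding A'_def .
  moreover have "\<forall>s\<in>S'. 0 < x' s \<and> x' s < 1"
    unfolding x'_def S'_def by simp
  ultimately show ?thesis using that by blast
qed

lemma mem_Union_iff_evalmap_strictly_between:
  assumes "finite S" "disjoint S" "\<forall>s\<in>S. 0 < x s \<and> x s < 1"
  shows "e \<in> \<Union>S \<longleftrightarrow> 0 < evalmap (A, S, x) e \<and> evalmap (A, S, x) e < 1"
proof (cases "e \<in> \<Union>S")
  case True
  then obtain s where "s \<in> S" "e \<in> s" by blast
  with assms True show ?thesis by (simp add: evalmap_inside)
next
  case False
  then show ?thesis by (simp add: evalmap_outside indicator_def)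
qed

lemma trace_in_halves:
  assumes "s' \<noteq> {}" "s'' \<noteq> {}" "s' \<inter> s'' = {}" "s' \<union> s'' = s"
    and "s \<inter> A = s' \<or> s \<inter> A = s''" "s \<inter> B = s' \<or> s \<inter> B = s''"
  shows "s \<inter> A \<noteq> {}" "s \<inter> B = s \<inter> A \<or> s \<inter> B = s - A"
proof -
  have "s - s' = s''" "s - s'' = s'"
    using assms(3,4) by auto
  moreover have "s - A = s - (s \<inter> A)" by blast
  ultimately show "s \<inter> A \<noteq> {}" "s \<inter> B = s \<inter> A \<or> s \<inter> B = s - A"
    using assms(1,2,5,6) by metis+
qed

lemma flip_of_glide_traces:
  assumes "finite S" "disjoint S"
    and trace: "\<And>s. s \<in> S \<Longrightarrow> s \<inter> A \<noteq> {} \<and> (s \<inter> B = s \<inter> A \<or> s \<inter> B = s - A)"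
    and ev: "evalmap (A, S, x) = evalmap (B, S, y)"
  defines "T \<equiv> {s \<in> S. s \<inter> B \<noteq> s \<inter> A}"
  shows "B = gprod (bprod T) A" "\<forall>s\<in>S - T. y s = x s" "\<forall>t\<in>T. y t = 1 - x t"
proof -
  have TS: "T \<subseteq> S" unfolding T_def by auto
  have bT: "bprod T = \<Union>T"
    using assms(2) TS by (simp add: bprod_disjoint pairwise_subset)
  have side: "e \<in> B \<longleftrightarrow> (e \<in> A \<longleftrightarrow> s \<notin> T)" if "s \<in> S" "e \<in> s" for s e
    using that trace[OF that(1)] unfolding T_def by blast
  show "B = gprod (bprod T) A"
  proof (rule set_eqI)
    fix e
    show "e \<in> B \<longleftrightarrow> e \<in> gprod (bprod T) A"
    proof (cases "e \<in> \<Union>S")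
      case True
      then obtain s where s: "s \<in> S" "e \<in> s" by blast
      then show ?thesis
        unfolding bT mem_gprod_iff mem_Union_subset_disjoint[OF assms(2) TS s] side[OF s]
        by blast
    next
      case False
      with TS have "e \<notin> \<Union>T" by blast
      with False ev show ?thesis
        by (auto simp: bT mem_gprod_iff evalmap_outside indicator_def dest: fun_cong[of _ _ e])
    qed
  qed
  have "y s = (if s \<in> T then 1 - x s else x s)" if s: "s \<in> S" for s
  proof -
    obtain e where e: "e \<in> s" "e \<in> A" using trace[OF s] by blast
    with s have "evalmap (A, S, x) e = 1 - x s" "evalmap (B, S, y) e = (if s \<in> T then y s else 1 - y s)"
      using side[OF s e(1)] by (simp_all add: evalmap_inside assms(1,2))
    with ev show ?thesis by auto
  qed
  with TS show "\<forall>s\<in>S - T. y s = x s" "\<forall>t\<in>T. y t = 1 - x t"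
    by auto
qed

lemma glide_step_of_interior_evalmap_eq:
  assumes disj: "\<forall>(s,t)\<in>Ind. s \<inter> t = {}"
    and cub_inj: "\<forall>S1 S2. cubic Gl Ind S1 \<longrightarrow> cubic Gl Ind S2 \<longrightarrow> S1 \<noteq> S2 \<longrightarrow> bprod S1 \<noteq> bprod S2"
    and part: "\<forall>s\<in>Gl. \<exists>s' s''. s' \<noteq> {} \<and> s'' \<noteq> {} \<and> s' \<inter> s'' = {} \<and> s' \<union> s'' = s \<and>
                 (\<forall>A\<in>D. gprod s A \<in> D \<longrightarrow> s \<inter> A = s' \<or> s \<inter> A = s'')"
    and p: "in_XD Gl Ind D (A, S, x)" "\<forall>s\<in>S. 0 < x s \<and> x s < 1"
    and q: "in_XD Gl Ind D (B, R, y)" "\<forall>s\<in>R. 0 < y s \<and> y s < 1"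
    and ev: "evalmap (A, S, x) = evalmap (B, R, y)"
  shows "glide_step Gl Ind (A, S, x) (B, R, y)"
proof -
  have gp: "is_gpoint Gl Ind (A, S, x)" "is_gpoint Gl Ind (B, R, y)"
    using p(1) q(1) unfolding in_XD_def by simp_all
  then have cub: "cubic Gl Ind S" "cubic Gl Ind R"
    unfolding is_gpoint_def by simp_all
  then have fin: "finite S" "finite R" and dj: "disjoint S" "disjoint R"
    using disj by (simp_all add: cubic_finite cubic_disjoint)
  have "\<Union>S = \<Union>R"
  proof (rule set_eqI)
    fix e
    show "e \<in> \<Union>S \<longleftrightarrow> e \<in> \<Union>R"
      unfolding mem_Union_iff_evalmap_strictly_between[OF fin(1) dj(1) p(2), of e A]
        mem_Union_iff_evalmap_strictly_between[OF fin(2) dj(2) q(2), of e B] ev ..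
  qed
  then have SR: "S = R"
    using cub_inj cub by (metis bprod_disjoint dj)
  have trace: "s \<inter> A \<noteq> {} \<and> (s \<inter> B = s \<inter> A \<or> s \<inter> B = s - A)" if s: "s \<in> S" for s
  proof -
    have "s \<in> Gl" using cub(1) s unfolding cubic_def by blast
    then obtain s' s'' where halves: "s' \<noteq> {}" "s'' \<noteq> {}" "s' \<inter> s'' = {}" "s' \<union> s'' = s"
      and traces: "\<forall>A\<in>D. gprod s A \<in> D \<longrightarrow> s \<inter> A = s' \<or> s \<inter> A = s''"
      using bspec[OF part \<open>s \<in> Gl\<close>] by blast
    have "A \<in> D" "gprod s A \<in> D" "B \<in> D" "gprod s B \<in> D"
      using in_XD_vertex[OF p(1), of "{}"] in_XD_vertex[OF p(1), of "{s}"]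
        in_XD_vertex[OF q(1), of "{}"] in_XD_vertex[OF q(1), of "{s}"] s SR
      by simp_all
    with traces have "s \<inter> A = s' \<or> s \<inter> A = s''" "s \<inter> B = s' \<or> s \<inter> B = s''"
      by simp_all
    from trace_in_halves[OF halves this] show ?thesis by blast
  qed
  let ?T = "{s \<in> S. s \<inter> B \<noteq> s \<inter> A}"
  have "B = gprod (bprod ?T) A" "\<forall>s\<in>S - ?T. y s = x s" "\<forall>t\<in>?T. y t = 1 - x t"
    using flip_of_glide_traces[OF fin(1) dj(1) trace] ev SR by simp_all
  moreover have "?T \<subseteq> S" by blast
  ultimately show ?thesis
    using gp SR unfolding glide_step_def by blast
qed

theorem lemma10p1:
  fixes Gl :: "'e set set" and Ind :: "('e set \<times> 'e set) set" and D :: "'e set set"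
  assumes gs: "gliding_system Gl Ind"
    and disj: "\<forall>(s,t)\<in>Ind. s \<inter> t = {}"
    and cub_inj: "\<forall>S1 S2. cubic Gl Ind S1 \<longrightarrow> cubic Gl Ind S2 \<longrightarrow> S1 \<noteq> S2 \<longrightarrow> bprod S1 \<noteq> bprod S2"
    and part: "\<forall>s\<in>Gl. \<exists>s' s''. s' \<noteq> {} \<and> s'' \<noteq> {} \<and> s' \<inter> s'' = {} \<and> s' \<union> s'' = s \<and>
                 (\<forall>A\<in>D. gprod s A \<in> D \<longrightarrow> s \<inter> A = s' \<or> s \<inter> A = s'')"
  shows "\<forall>p q. in_XD Gl Ind D p \<longrightarrow> in_XD Gl Ind D q \<longrightarrow> evalmap p = evalmap q
            \<longrightarrow> glide_equiv Gl Ind p q"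
proof (intro allI impI)
  fix p q :: "'e gpoint"
  assume p: "in_XD Gl Ind D p" and q: "in_XD Gl Ind D q" and ev: "evalmap p = evalmap q"
  obtain A S x B R y where pq: "p = (A, S, x)" "q = (B, R, y)"
    by (cases p, cases q) auto
  obtain A' S' x' where p': "in_XD Gl Ind D (A', S', x')" "\<forall>s\<in>S'. 0 < x' s \<and> x' s < 1"
    and pp': "glide_equiv Gl Ind p (A', S', x')"
    using in_XD_interior_representative[OF disj p[unfolded pq(1)]] pq(1) by blast
  obtain B' R' y' where q': "in_XD Gl Ind D (B', R', y')" "\<forall>s\<in>R'. 0 < y' s \<and> y' s < 1"
    and qq': "glide_equiv Gl Ind q (B', R', y')"
    using in_XD_interior_representative[OF disj q[unfolded pq(2)]] pq(2) by blast
  have "evalmap (A', S', x') = evalmap (B', R', y')"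
    using ev evalmap_glide_equiv[OF disj pp'] evalmap_glide_equiv[OF disj qq'] by simp
  then have "glide_step Gl Ind (A', S', x') (B', R', y')"
    using glide_step_of_interior_evalmap_eq[OF disj cub_inj part p' q'] by blast
  then show "glide_equiv Gl Ind p q"
    using pp' qq' by (meson glide_equiv_of_step glide_equiv_sym glide_equiv_trans)
qed

end
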